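(* Let $p$ be a prime, $m\ge1$ with $p>m$, and $1\le k\le m$. Let $E_k(x)=\exp\big(\sum_{i=0}^k\frac{x^{p^i}}{p^i}\big)$, let $\pi_k\in\mathbb{C}_p$ be a root of $\sum_{i=0}^k\frac{x^{p^i}}{p^i}=0$ with $\mathrm{ord}_p\,\pi_k=\frac{1}{p^{k-1}(p-1)}$, $\theta_k(x)=E_k(\pi_kx)$ and $\hat\theta_k(x)=\prod_{j=0}^\infty\theta_k(x^{p^j})$. For $0\le j\le k-1$ let $\gamma_{kj}=\sum_{i=0}^j\frac{\pi_k^{p^i}}{p^i}$. Then $$\hat\theta_k(x)=\exp\Big(\sum_{j=0}^{k-1}\gamma_{kj}x^{p^j}\Big),$$ and $\mathrm{ord}_p\,\gamma_{kj}=\frac{1}{p^{k-1-j}(p-1)}-j$.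
   Context: $\mathrm{ord}_p$ is the $p$-adic valuation on $\mathbb{C}_p$ with $\mathrm{ord}_p(p)=1$. *)

theory Defs
  imports "HOL-Computational_Algebra.Formal_Power_Series" "HOL-Library.Extended_Real"
begin

text \<open>A (rank one, real-valued) non-archimedean valuation on a field, normalised by ord(p) = 1.
  The p-adic valuation on C_p is the intended instance.\<close>
definition padic_ord :: "nat \<Rightarrow> ('a::field_char_0 \<Rightarrow> ereal) \<Rightarrow> bool" where
  "padic_ord p v \<longleftrightarrow>
     (\<forall>x. v x = \<infinity> \<longleftrightarrow> x = 0) \<and>
     (\<forall>x. v x \<noteq> -\<infinity>) \<and>
     (\<forall>x y. v (x * y) = v x + v y) \<and>
     (\<forall>x y. v (x + y) \<ge> min (v x) (v y)) \<and>
     v (of_nat p) = 1"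

text \<open>Exponential of a formal power series with zero constant term.\<close>
definition fps_Exp :: "'a::field_char_0 fps \<Rightarrow> 'a fps" where
  "fps_Exp f = fps_exp 1 oo f"

definition Lk_fps :: "nat \<Rightarrow> nat \<Rightarrow> 'a::field_char_0 fps" where
  "Lk_fps p k = (\<Sum>i\<le>k. fps_const (1 / of_nat (p ^ i)) * fps_X ^ (p ^ i))"

definition Lk_val :: "nat \<Rightarrow> nat \<Rightarrow> 'a::field_char_0 \<Rightarrow> 'a" where
  "Lk_val p k x = (\<Sum>i\<le>k. x ^ (p ^ i) / of_nat (p ^ i))"

definition Ek :: "nat \<Rightarrow> nat \<Rightarrow> 'a::field_char_0 fps" where
  "Ek p k = fps_Exp (Lk_fps p k)"

definition theta :: "nat \<Rightarrow> nat \<Rightarrow> 'a::field_char_0 \<Rightarrow> 'a fps" where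
  "theta p k \<pi> = Ek p k oo (fps_const \<pi> * fps_X)"

text \<open>Partial products prod_{j<n} theta_k(x^(p^j)); hat-theta_k is their limit in the
  (x-adic) topology of formal power series.\<close>
definition theta_hat_partial :: "nat \<Rightarrow> nat \<Rightarrow> 'a::field_char_0 \<Rightarrow> nat \<Rightarrow> 'a fps" where
  "theta_hat_partial p k \<pi> n = (\<Prod>j<n. theta p k \<pi> oo fps_X ^ (p ^ j))"

definition gamma :: "nat \<Rightarrow> 'a::field_char_0 \<Rightarrow> nat \<Rightarrow> 'a" where
  "gamma p \<pi> j = (\<Sum>i\<le>j. \<pi> ^ (p ^ i) / of_nat (p ^ i))"

end

theory Submission
  imports Defs
begin

(*
  Since exp turns sums into products, the n-th partial product of hat-theta_k is
  exp (sum_{j<n} sum_{i<=k} pi^(p^i) x^(p^(i+j)) / p^i).  For l < n the coefficient of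
  x^(p^l) in this exponent is gamma_{k,min(l,k)}, and gamma_{kk} = 0 is precisely the
  equation defining pi = pi_k; so the exponents converge x-adically to
  sum_{j<k} gamma_{kj} x^(p^j), and composition with exp is x-adically continuous.

  With r = ord pi, the summands pi^(p^i)/p^i of gamma_{kj} have valuations p^i r - i,
  which strictly decrease for i <= j < k because p^j r <= 1; by the ultrametric
  inequality the last summand determines ord gamma_{kj}.
*)

lemma fps_cutoff_power: "fps_cutoff n (f ^ i) = fps_cutoff n (fps_cutoff n f ^ i)"
proof (induction i)
  case (Suc i)
  have "fps_cutoff n (f ^ Suc i) = fps_cutoff n (fps_cutoff n f * fps_cutoff n (f ^ i))"
    by (simp add: fps_eq_iff fps_cutoff_left_mult_nth fps_cutoff_right_mult_nth)
  also have "\<dots> = fps_cutoff n (fps_cutoff n f * fps_cutoff n (fps_cutoff n f ^ i))"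
    by (simp only: Suc.IH)
  also have "\<dots> = fps_cutoff n (fps_cutoff n f ^ Suc i)"
    by (simp add: fps_eq_iff fps_cutoff_left_mult_nth fps_cutoff_right_mult_nth)
  finally show ?case .
qed simp

lemma fps_cutoff_compose: "fps_cutoff n (a oo b) = fps_cutoff n (a oo fps_cutoff n b)"
proof -
  have "fps_nth (b ^ i) k = fps_nth (fps_cutoff n b ^ i) k" if "k < n" for i k
    using arg_cong[OF fps_cutoff_power[of n b i], of "\<lambda>f. fps_nth f k"] that by simp
  then show ?thesis by (simp add: fps_eq_iff fps_compose_nth)
qed

lemma tendsto_fps_compose_right:
  fixes a :: "'a::comm_ring_1 fps"
  assumes "(f \<longlongrightarrow> g) F"
  shows "((\<lambda>x. a oo f x) \<longlongrightarrow> a oo g) F"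
proof (rule tendsto_fpsI)
  fix n
  have "\<forall>\<^sub>F x in F. \<forall>k\<in>{..n}. fps_nth (f x) k = fps_nth g k"
    using assms by (simp add: eventually_ball_finite_distrib tendsto_fps_iff)
  then show "\<forall>\<^sub>F x in F. fps_nth (a oo f x) n = fps_nth (a oo g) n"
  proof eventually_elim
    case (elim x)
    then have "fps_cutoff (Suc n) (f x) = fps_cutoff (Suc n) g"
      by (auto simp: fps_cutoff_eq_fps_cutoff_iff)
    then have "fps_cutoff (Suc n) (a oo f x) = fps_cutoff (Suc n) (a oo g)"
      by (metis fps_cutoff_compose)
    then show ?case by (simp add: fps_cutoff_eq_fps_cutoff_iff)
  qed
qed

lemma fps_deriv_eq_mult_unique:
  fixes y z h :: "'a::field_char_0 fps"
  assumes y: "fps_deriv y = y * h" and z: "fps_deriv z = z * h"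
    and z0: "fps_nth z 0 \<noteq> 0" and yz0: "fps_nth y 0 = fps_nth z 0"
  shows "y = z"
proof -
  have "fps_deriv (y / z) = (y * h * z - y * (z * h)) / z\<^sup>2"
    using z0 by (simp add: fps_divide_deriv y z)
  then have "fps_deriv (y / z) = 0" by (simp add: algebra_simps)
  then have "y / z = fps_const (fps_nth (y / z) 0)" by simp
  also have "\<dots> = 1" using z0 yz0 by simp
  finally show "y = z"
    using z0 by (metis dvd_div_mult_self fps_unit_dvd mult_1)
qed

lemma fps_Exp_nth_0 [simp]: "fps_nth (fps_Exp f) 0 = 1"
  by (simp add: fps_Exp_def)

lemma fps_deriv_fps_Exp:
  "fps_nth f 0 = 0 \<Longrightarrow> fps_deriv (fps_Exp f) = fps_Exp f * fps_deriv f"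
  by (simp add: fps_Exp_def fps_compose_deriv)

lemma fps_Exp_add:
  assumes "fps_nth f 0 = 0" and "fps_nth g 0 = 0"
  shows "fps_Exp (f + g) = fps_Exp f * fps_Exp g"
  by (rule fps_deriv_eq_mult_unique[where h = "fps_deriv f + fps_deriv g"])
     (use assms in \<open>simp_all add: fps_deriv_fps_Exp algebra_simps\<close>)

lemma fps_Exp_sum:
  assumes "\<And>i. i \<in> S \<Longrightarrow> fps_nth (f i) 0 = 0"
  shows "fps_Exp (sum f S) = (\<Prod>i\<in>S. fps_Exp (f i))"
  using assms
proof (induction S rule: infinite_finite_induct)
  case (insert x F)
  then show ?case by (simp add: fps_Exp_add fps_sum_nth)
qed (simp_all add: fps_Exp_def)

lemma fps_Exp_compose:
  assumes "fps_nth f 0 = 0" and "fps_nth g 0 = 0"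
  shows "fps_Exp f oo g = fps_Exp (f oo g)"
  using assms by (simp add: fps_Exp_def fps_compose_assoc)

lemma fps_monom_compose:
  fixes g :: "'a::idom fps"
  assumes "fps_nth g 0 = 0"
  shows "(fps_const c * fps_X ^ m) oo g = fps_const c * g ^ m"
  using assms by (simp add: fps_X_power_compose flip: fps_const_mult_apply_left)

lemma theta_compose_X_power:
  fixes \<pi> :: "'a::field_char_0"
  assumes "p > 0" and "q > 0"
  shows "theta p k \<pi> oo fps_X ^ q =
    fps_Exp (\<Sum>i\<le>k. fps_const (\<pi> ^ p ^ i / of_nat (p ^ i)) * fps_X ^ (p ^ i * q))"
proof -
  define g :: "'a fps" where "g = fps_const \<pi> * fps_X ^ q"
  have g0: "fps_nth g 0 = 0" using assms by (simp add: g_def)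
  have "theta p k \<pi> oo fps_X ^ q = Ek p k oo ((fps_const \<pi> * fps_X) oo fps_X ^ q)"
    using assms by (simp add: theta_def fps_compose_assoc)
  also have "(fps_const \<pi> * fps_X) oo fps_X ^ q = g"
    using assms by (simp add: g_def flip: fps_const_mult_apply_left)
  also have "Ek p k oo g = fps_Exp (Lk_fps p k oo g)"
    using assms g0 by (simp add: Ek_def fps_Exp_compose Lk_fps_def fps_sum_nth)
  also have "Lk_fps p k oo g =
      (\<Sum>i\<le>k. fps_const (\<pi> ^ p ^ i / of_nat (p ^ i)) * fps_X ^ (p ^ i * q))"
    unfolding Lk_fps_def fps_compose_sum_distrib
    by (intro sum.cong refl)
       (simp only: fps_monom_compose[OF g0],
        simp add: g_def power_mult_distrib mult.commute[of q] mult.assoc[symmetric]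
          flip: power_mult)
  finally show ?thesis .
qed

definition log_theta_hat_partial :: "nat \<Rightarrow> nat \<Rightarrow> 'a::field_char_0 \<Rightarrow> nat \<Rightarrow> 'a fps" where
  "log_theta_hat_partial p k \<pi> n =
     (\<Sum>j<n. \<Sum>i\<le>k. fps_const (\<pi> ^ p ^ i / of_nat (p ^ i)) * fps_X ^ (p ^ (i + j)))"

lemma theta_hat_partial_eq_fps_Exp:
  "p > 0 \<Longrightarrow> theta_hat_partial p k \<pi> n = fps_Exp (log_theta_hat_partial p k \<pi> n)"
  unfolding theta_hat_partial_def log_theta_hat_partial_def
  by (subst fps_Exp_sum) (simp_all add: fps_sum_nth theta_compose_X_power power_add)

lemma log_theta_hat_partial_nth_power:
  fixes \<pi> :: "'a::field_char_0"
  assumes "p > 1" and "l < n"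
  shows "fps_nth (log_theta_hat_partial p k \<pi> n) (p ^ l) = gamma p \<pi> (min l k)"
proof -
  define a :: "nat \<Rightarrow> 'a" where "a i = \<pi> ^ p ^ i / of_nat (p ^ i)" for i
  have "fps_nth (log_theta_hat_partial p k \<pi> n) (p ^ l) =
      (\<Sum>j<n. \<Sum>i\<le>k. if j = l - i \<and> i \<le> l then a i else 0)"
    unfolding log_theta_hat_partial_def fps_sum_nth
    using assms(1) by (intro sum.cong refl) (auto simp: a_def power_inject_exp)
  also have "\<dots> = (\<Sum>i\<le>k. if i \<le> l then a i else 0)"
    using assms(2) by (subst sum.swap) (intro sum.cong refl, auto)
  also have "\<dots> = sum a {i \<in> {..k}. i \<le> l}"
    by (rule sum.inter_filter[symmetric]) simp
  also have "{i \<in> {..k}. i \<le> l} = {..min l k}"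
    by auto
  finally show ?thesis
    by (simp add: gamma_def a_def)
qed

lemma log_theta_hat_partial_tendsto:
  fixes \<pi> :: "'a::field_char_0"
  assumes "p > 1" and "Lk_val p k \<pi> = 0"
  shows "log_theta_hat_partial p k \<pi> \<longlonglongrightarrow>
           (\<Sum>j<k. fps_const (gamma p \<pi> j) * fps_X ^ (p ^ j))"
proof (rule tendsto_fpsI)
  fix t
  show "\<forall>\<^sub>F n in sequentially. fps_nth (log_theta_hat_partial p k \<pi> n) t =
          fps_nth (\<Sum>j<k. fps_const (gamma p \<pi> j) * fps_X ^ (p ^ j)) t"
    using eventually_gt_at_top[of t]
  proof eventually_elim
    case (elim n)
    show ?case
    proof (cases "\<exists>l. t = p ^ l")
      case True
      then obtain l where t: "t = p ^ l" by blast
      have "l < 2 ^ l" by simp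
      also have "\<dots> \<le> p ^ l" using assms(1) by (simp add: power_mono)
      finally have ln: "l < n" using elim t by simp
      moreover have "gamma p \<pi> k = 0"
        using assms(2) by (simp add: gamma_def Lk_val_def)
      moreover have "fps_nth (\<Sum>j<k. fps_const (gamma p \<pi> j) * fps_X ^ (p ^ j)) t =
          (if l < k then gamma p \<pi> l else 0)"
        using assms(1) by (simp add: t fps_sum_nth power_inject_exp if_distrib cong: if_cong)
      ultimately show ?thesis
        using log_theta_hat_partial_nth_power[OF assms(1) ln, of k \<pi>] by (simp add: t min_def)
    next
      case False
      then show ?thesis by (auto simp: log_theta_hat_partial_def fps_sum_nth)
    qed
  qed
qed

lemma theta_hat_partial_tendsto:
  fixes \<pi> :: "'a::field_char_0"
  assumes "p > 1" and "Lk_val p k \<pi> = 0"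
  shows "theta_hat_partial p k \<pi> \<longlonglongrightarrow>
           fps_Exp (\<Sum>j<k. fps_const (gamma p \<pi> j) * fps_X ^ (p ^ j))"
proof -
  have Exp_log: "theta_hat_partial p k \<pi> = (\<lambda>n. fps_exp 1 oo log_theta_hat_partial p k \<pi> n)"
    using assms(1) by (simp add: fun_eq_iff theta_hat_partial_eq_fps_Exp fps_Exp_def)
  show ?thesis
    unfolding Exp_log fps_Exp_def
    by (rule tendsto_fps_compose_right[OF log_theta_hat_partial_tendsto[OF assms]])
qed

locale padic_valuation =
  fixes p :: nat and v :: "'a::field_char_0 \<Rightarrow> ereal"
  assumes padic_ord: "padic_ord p v"
begin

lemma val_eq_infinity_iff [simp]: "v x = \<infinity> \<longleftrightarrow> x = 0"
  using padic_ord by (simp add: padic_ord_def)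

lemma val_zero [simp]: "v 0 = \<infinity>"
  by simp

lemma val_mult: "v (x * y) = v x + v y"
  using padic_ord by (simp add: padic_ord_def)

lemma val_add_ge: "min (v x) (v y) \<le> v (x + y)"
  using padic_ord by (simp add: padic_ord_def)

lemma val_of_nat_p [simp]: "v (of_nat p) = 1"
  using padic_ord by (simp add: padic_ord_def)

lemma p_gt_0: "0 < p"
proof (rule ccontr)
  assume "\<not> 0 < p"
  then have "v (of_nat p) = \<infinity>" by simp
  then show False by simp
qed

lemma val_finite:
  assumes "x \<noteq> 0"
  obtains r where "v x = ereal r"
  using padic_ord assms by (cases "v x") (auto simp: padic_ord_def)

lemma val_one [simp]: "v 1 = 0"
proof -
  obtain r where "v 1 = ereal r" using val_finite[of 1] by auto
  with val_mult[of 1 1] show ?thesis by simp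
qed

lemma val_uminus [simp]: "v (- x) = v x"
proof -
  obtain r where r: "v (- 1) = ereal r" using val_finite[of "- 1"] by auto
  with val_mult[of "- 1" "- 1"] have "v (- 1) = 0" by simp
  with val_mult[of "- 1" x] show ?thesis by simp
qed

lemma val_inverse:
  assumes "x \<noteq> 0"
  shows "v (inverse x) = - v x"
proof -
  obtain r where r: "v x = ereal r" using val_finite assms by blast
  obtain s where s: "v (inverse x) = ereal s" using val_finite[of "inverse x"] assms by auto
  from val_mult[of x "inverse x"] have "r + s = 0" using assms r s by (simp add: zero_ereal_def)
  with r s show ?thesis by simp
qed

lemma val_power: "v x = ereal r \<Longrightarrow> v (x ^ n) = ereal (real n * r)"
  by (induction n) (simp_all add: val_mult zero_ereal_def algebra_simps)

lemma val_of_nat_p_power: "v (of_nat p ^ i) = ereal (real i)"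
  using val_power[of "of_nat p" 1 i] by (simp add: one_ereal_def)

lemma val_add_eq_right:
  assumes "v y < v x"
  shows "v (x + y) = v y"
proof -
  have "min (v (x + y)) (v x) \<le> v y"
    using val_add_ge[of "x + y" "- x"] by simp
  with val_add_ge[of x y] assms show ?thesis by (auto simp: min_def split: if_splits)
qed

lemma val_sum_greater:
  assumes "finite A" and "c < \<infinity>" and "\<And>i. i \<in> A \<Longrightarrow> c < v (f i)"
  shows "c < v (sum f A)"
  using assms(1,3)
proof (induction A rule: finite_induct)
  case (insert i A)
  then have "c < min (v (f i)) (v (sum f A))" by simp
  also have "\<dots> \<le> v (sum f (insert i A))" using insert.hyps by (simp add: val_add_ge)
  finally show ?case .
qed (use assms(2) in auto)

lemma val_sum_eq_dominant:
  fixes f :: "nat \<Rightarrow> 'a" and j :: nat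
  assumes "\<And>i. i < j \<Longrightarrow> v (f j) < v (f i)"
  shows "v (\<Sum>i\<le>j. f i) = v (f j)"
proof (cases j)
  case (Suc j')
  have "v (f j) < \<infinity>"
    using assms[of 0] Suc by (auto intro: less_le_trans)
  then have "v (f j) < v (\<Sum>i<j. f i)"
    by (intro val_sum_greater assms) auto
  moreover have "(\<Sum>i\<le>j. f i) = (\<Sum>i<j. f i) + f j"
    by (simp add: lessThan_Suc_atMost[symmetric])
  ultimately show ?thesis
    using val_add_eq_right[where x = "\<Sum>i<j. f i" and y = "f j"] by simp
qed simp

lemma val_gamma:
  assumes "v \<pi> = ereal r" and "0 < r" and "real p ^ j * r \<le> 1"
  shows "v (gamma p \<pi> j) = ereal (real p ^ j * r - real j)"
proof -
  define a where "a i = \<pi> ^ p ^ i / of_nat (p ^ i)" for i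
  have val_a: "v (a i) = ereal (real p ^ i * r - real i)" for i
  proof -
    have "of_nat (p ^ i) \<noteq> (0 :: 'a)"
      using p_gt_0 by simp
    then show ?thesis
      using val_power[OF assms(1), of "p ^ i"]
      by (simp add: a_def divide_inverse val_mult val_inverse val_of_nat_p_power)
  qed
  have "real p ^ j * r - real j < real p ^ i * r - real i" if "i < j" for i
  proof -
    have "0 < real p ^ i * r"
      using assms(2) p_gt_0 by simp
    with assms(3) that show ?thesis by linarith
  qed
  then have "v (gamma p \<pi> j) = v (a j)"
    unfolding gamma_def a_def[symmetric] by (intro val_sum_eq_dominant) (simp add: val_a)
  with val_a show ?thesis by simp
qed

end

theorem mainTheorem6:
  fixes p m k :: nat and v :: "'a::field_char_0 \<Rightarrow> ereal" and \<pi> :: 'a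
  assumes "prime p" and "m \<ge> 1" and "p > m" and "1 \<le> k" and "k \<le> m"
    and "padic_ord p v"
    and "Lk_val p k \<pi> = 0"
    and "v \<pi> = ereal (1 / (real p ^ (k - 1) * (real p - 1)))"
  shows "theta_hat_partial p k \<pi> \<longlonglongrightarrow>
           fps_Exp (\<Sum>j<k. fps_const (gamma p \<pi> j) * fps_X ^ (p ^ j)) \<and>
         (\<forall>j<k. v (gamma p \<pi> j) = ereal (1 / (real p ^ (k - 1 - j) * (real p - 1)) - real j))"
proof -
  have p: "real p \<ge> 2" using \<open>prime p\<close> prime_ge_2_nat by simp
  interpret padic_valuation p v by unfold_locales fact
  define r where "r = 1 / (real p ^ (k - 1) * (real p - 1))"
  have "v (gamma p \<pi> j) = ereal (1 / (real p ^ (k - 1 - j) * (real p - 1)) - real j)"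
    if "j < k" for j
  proof -
    have "real p ^ (k - 1) = real p ^ (k - 1 - j) * real p ^ j"
      using that by (simp flip: power_add)
    then have pjr: "real p ^ j * r = 1 / (real p ^ (k - 1 - j) * (real p - 1))"
      using p by (simp add: r_def field_simps)
    have "1 * 1 \<le> real p ^ (k - 1 - j) * (real p - 1)"
      using p by (intro mult_mono) auto
    then have "real p ^ j * r \<le> 1" unfolding pjr by simp
    moreover have "0 < r" using p by (simp add: r_def)
    ultimately show ?thesis
      using val_gamma[of \<pi> r j] assms(8) pjr by (simp add: r_def)
  qed
  moreover have "p > 1" using p by simp
  ultimately show ?thesis using theta_hat_partial_tendsto assms(7) by blast
qed

end
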